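(* Let $X$ and $Y$ be Banach spaces, $T:X\to Y$ a bounded linear operator, and $Z$ a closed subspace of $X$. If $T[Z]$ is closed and complemented in $Y$ and $Z\cap\ker(T)$ is complemented in $X$, then $Z$ is complemented in $X$. *)

theory Defs
  imports "HOL-Analysis.Analysis"
begin

definition complemented :: "'a::real_normed_vector set \<Rightarrow> bool" where
  "complemented S \<longleftrightarrow> subspace S \<and> closed S \<and>
     (\<exists>W. subspace W \<and> closed W \<and> S \<inter> W = {0} \<and>
          (\<forall>x. \<exists>s\<in>S. \<exists>w\<in>W. x = s + w))"

end

theory Submission
  imports Defs
begin

text \<open>If \<open>U\<close> complements \<open>T[Z]\<close> and \<open>W\<close> complements \<open>Z \<inter> ker T\<close>, then \<open>W \<inter> T\<^sup>-\<^sup>1[U]\<close>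
  complements \<open>Z\<close>: given \<open>x\<close>, split \<open>T x = T z\<^sub>0 + u\<close> and \<open>x - z\<^sub>0 = k + w\<close>; then \<open>T w = u\<close>,
  so \<open>x = (z\<^sub>0 + k) + w\<close>. Closedness of the complement is inherited from \<open>U\<close>, \<open>W\<close> by continuity
  of \<open>T\<close>.\<close>

lemma direct_sum_via_image_and_kernel:
  fixes T :: "'a::real_vector \<Rightarrow> 'b::real_vector"
  assumes T: "linear T" and Z: "subspace Z"
    and U_disj: "T ` Z \<inter> U = {0}" and U_sum: "\<forall>y. \<exists>v\<in>T ` Z. \<exists>u\<in>U. y = v + u"
    and W_disj: "(Z \<inter> {x. T x = 0}) \<inter> W = {0}"
    and W_sum: "\<forall>x. \<exists>k\<in>Z \<inter> {x. T x = 0}. \<exists>w\<in>W. x = k + w"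
  shows "Z \<inter> (W \<inter> T -` U) = {0}"
    and "\<forall>x. \<exists>z\<in>Z. \<exists>c\<in>W \<inter> T -` U. x = z + c"
proof -
  interpret T: linear T by fact
  show "Z \<inter> (W \<inter> T -` U) = {0}"
  proof
    show "Z \<inter> (W \<inter> T -` U) \<subseteq> {0}"
    proof
      fix z assume z: "z \<in> Z \<inter> (W \<inter> T -` U)"
      then have "T z = 0" using U_disj by auto
      then show "z \<in> {0}" using z W_disj by auto
    qed
    show "{0} \<subseteq> Z \<inter> (W \<inter> T -` U)"
      using Z U_disj W_disj by (auto simp: subspace_0)
  qed
  show "\<forall>x. \<exists>z\<in>Z. \<exists>c\<in>W \<inter> T -` U. x = z + c"
  proof
    fix x
    obtain z0 u where z0: "z0 \<in> Z" and u: "u \<in> U" and Tx: "T x = T z0 + u"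
      using U_sum by blast
    obtain k w where k: "k \<in> Z" "T k = 0" and w: "w \<in> W" and split: "x - z0 = k + w"
      using W_sum by blast
    have "T w = T (x - z0) - T k" using split by (simp add: T.add)
    also have "\<dots> = u" using k(2) Tx by (simp add: T.diff)
    finally have "w \<in> W \<inter> T -` U" using w u by auto
    moreover have "z0 + k \<in> Z" using Z z0 k(1) by (simp add: subspace_add)
    moreover have "x = (z0 + k) + w" using split by (simp add: algebra_simps)
    ultimately show "\<exists>z\<in>Z. \<exists>c\<in>W \<inter> T -` U. x = z + c" by blast
  qed
qed

theorem lemma2p2:
  fixes T :: "'a::banach \<Rightarrow> 'b::banach" and Z :: "'a set"
  assumes "bounded_linear T"
    and "subspace Z" and "closed Z"
    and "complemented (T ` Z)"
    and "complemented (Z \<inter> {x. T x = 0})"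
  shows "complemented Z"
proof -
  obtain U where U: "subspace U" "closed U" "T ` Z \<inter> U = {0}"
      "\<forall>y. \<exists>v\<in>T ` Z. \<exists>u\<in>U. y = v + u"
    using assms(4) unfolding complemented_def by blast
  obtain W where W: "subspace W" "closed W" "(Z \<inter> {x. T x = 0}) \<inter> W = {0}"
      "\<forall>x. \<exists>k\<in>Z \<inter> {x. T x = 0}. \<exists>w\<in>W. x = k + w"
    using assms(5) unfolding complemented_def by blast
  have T: "linear T" using assms(1) bounded_linear.linear by blast
  have "subspace (W \<inter> T -` U)"
    using W(1) linear_subspace_vimage[OF T U(1)] by (rule subspace_inter)
  moreover have "closed (W \<inter> T -` U)"
    using W(2) closed_vimage[OF U(2) linear_continuous_on[OF assms(1)]] by (rule closed_Int)
  ultimately show ?thesis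
    using direct_sum_via_image_and_kernel[OF T assms(2) U(3,4) W(3,4)] assms(2,3)
    unfolding complemented_def by blast
qed

end
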